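(* Let $2\le n<d$ with $n=2$ or $n$ odd, let $t$ be as defined below, let $E\in\mathrm{SL}(d,q)$ and $T:=E^{-1}tE$. If $T$ is a weak doubling element, then $V_n+V_nT=V_n+V_nT^{-1}$.
   Context: Vectors are row vectors and matrices act from the right; $\mathrm{Fix}(g)=\{x\in\mathbb{F}_q^d: xg=x\}$. $e_1,\dots,e_d$ is the standard basis of $V=\mathbb{F}_q^d$, $V_n=\langle e_1,\dots,e_n\rangle$, $F_{d-n}=\langle e_{n+1},\dots,e_d\rangle$, and $n'=\min\{2n-1,d\}$. An element $c\in\mathrm{GL}(d,q)$ is a weak doubling element if (C1) $\dim(V_n+V_nc)=n'$ and (C2) if $n'<d$ then $\dim(F_{d-n}+\mathrm{Fix}(c))=d$. $E_{i,j}(\lambda)$ is the identity matrix with $(i,j)$ entry replaced by $\lambda$ ($i\ne j$). Here $q=p^f$. The element $t$ is: $E_{1,2}(1)$ if $n=2$; $\operatorname{diag}(z_1,I_{d-n})$ if $n>2$ and $p=2$; $\operatorname{diag}(z_2,I_{d-n})$ if $n>2$ and $p$ odd, where ($P_\sigma$ being the $n\times n$ matrix with $e_iP_\sigma=e_{\sigma(i)}$) $z_1=P_{(1,n,n-1,\dots,2)}$ with $(1,n)$ entry changed to $-1$ if $n$ is even, and $z_2=P_{(2,n,n-1,\dots,3)}$ with $(2,n)$ entry changed to $-1$ if $n$ is odd. *)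

theory Defs
  imports "HOL-Analysis.Analysis"
begin

text \<open>The field F_q is a finite field type 'a::{field,finite}, its
characteristic p is CHAR('a).  V = F_q^d is the Cartesian vector type 'a^'d with
d = CARD('d); the standard basis e_1,...,e_d is indexed through a bijection
iota from {1..d} onto the index type 'd.  Vectors are row vectors and matrices
act from the right: xg is  x v* g.\<close>

definition std_basis :: "(nat \<Rightarrow> 'd::finite) \<Rightarrow> nat \<Rightarrow> 'a::field ^ 'd" where
  "std_basis \<iota> i = axis (\<iota> i) 1"

definition Vsub :: "(nat \<Rightarrow> 'd::finite) \<Rightarrow> nat \<Rightarrow> ('a::field ^ 'd) set" where
  "Vsub \<iota> n = vec.span (std_basis \<iota> ` {1..n})"

definition Fsub :: "(nat \<Rightarrow> 'd::finite) \<Rightarrow> nat \<Rightarrow> ('a::field ^ 'd) set" where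
  "Fsub \<iota> n = vec.span (std_basis \<iota> ` {n+1..CARD('d)})"

definition img :: "('a::field ^ 'd) set \<Rightarrow> 'a ^ 'd ^ 'd \<Rightarrow> ('a ^ 'd) set" where
  "img W g = (\<lambda>x. x v* g) ` W"

definition ssum :: "('a::field ^ 'd) set \<Rightarrow> ('a ^ 'd) set \<Rightarrow> ('a ^ 'd) set" where
  "ssum A B = {a + b | a b. a \<in> A \<and> b \<in> B}"

definition Fix :: "'a::field ^ 'd ^ 'd \<Rightarrow> ('a ^ 'd) set" where
  "Fix g = {x. x v* g = x}"

definition nprime :: "nat \<Rightarrow> nat \<Rightarrow> nat" where
  "nprime n d = min (2 * n - 1) d"

definition weak_doubling :: "(nat \<Rightarrow> 'd::finite) \<Rightarrow> nat \<Rightarrow> 'a::field ^ 'd ^ 'd \<Rightarrow> bool" where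
  "weak_doubling \<iota> n c \<longleftrightarrow>
     invertible c \<and>
     vec.dim (ssum (Vsub \<iota> n) (img (Vsub \<iota> n) c)) = nprime n CARD('d) \<and>
     (nprime n CARD('d) < CARD('d) \<longrightarrow>
        vec.dim (ssum (Fsub \<iota> n) (Fix c)) = CARD('d))"

text \<open>Matrices indexed by positive naturals (1-based, as in the paper).
  Permutation matrix P_sigma: e_i P_sigma = e_{sigma i}, i.e. entry (i,j) is 1 iff j = sigma i.\<close>
definition perm_mat_nat :: "(nat \<Rightarrow> nat) \<Rightarrow> nat \<Rightarrow> nat \<Rightarrow> 'a::field" where
  "perm_mat_nat \<sigma> i j = (if j = \<sigma> i then 1 else 0)"

definition cyc1 :: "nat \<Rightarrow> nat \<Rightarrow> nat" where
  "cyc1 n i = (if i = 1 then n else i - 1)"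

definition cyc2 :: "nat \<Rightarrow> nat \<Rightarrow> nat" where
  "cyc2 n i = (if i = 1 then 1 else if i = 2 then n else i - 1)"

definition z1 :: "nat \<Rightarrow> nat \<Rightarrow> nat \<Rightarrow> 'a::field" where
  "z1 n i j = (if even n \<and> i = 1 \<and> j = n then - 1 else perm_mat_nat (cyc1 n) i j)"

definition z2 :: "nat \<Rightarrow> nat \<Rightarrow> nat \<Rightarrow> 'a::field" where
  "z2 n i j = (if odd n \<and> i = 2 \<and> j = n then - 1 else perm_mat_nat (cyc2 n) i j)"

definition t_nat :: "nat \<Rightarrow> nat \<Rightarrow> nat \<Rightarrow> 'a::field" where
  "t_nat n i j =
    (if n = 2 then (if i = j then 1 else if i = 1 \<and> j = 2 then 1 else 0)
     else if i \<le> n \<and> j \<le> n then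
       (if CHAR('a) = 2 then z1 n i j else z2 n i j)
     else if n < i \<and> n < j then (if i = j then 1 else 0)
     else 0)"

definition mat_of :: "(nat \<Rightarrow> 'd::finite) \<Rightarrow> (nat \<Rightarrow> nat \<Rightarrow> 'a) \<Rightarrow> 'a ^ 'd ^ 'd" where
  "mat_of \<iota> M = (\<chi> a b. M (inv_into {1..CARD('d)} \<iota> a) (inv_into {1..CARD('d)} \<iota> b))"

definition t_elem :: "(nat \<Rightarrow> 'd::finite) \<Rightarrow> nat \<Rightarrow> 'a::field ^ 'd ^ 'd" where
  "t_elem \<iota> n = mat_of \<iota> (t_nat n)"

end

theory Submission
  imports Defs
begin

text \<open>For \<open>T = E\<^sup>-\<^sup>1tE\<close> every vector \<open>y\<close> satisfies \<open>yT - y \<in> W := (im(t - 1))E\<close>, and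
\<open>dim W \<le> n - 1\<close>: \<open>im(t - 1)\<close> lies in \<open>V\<^sub>n\<close> because \<open>t\<close> fixes the last \<open>d - n\<close> coordinates,
but misses \<open>e\<^sub>1\<close> because the sum of the coordinates indexed by some \<open>G \<ni> 1\<close>, \<open>G \<subseteq> {1..n}\<close>,
is \<open>t\<close>-invariant (\<open>G = {1}\<close>, or \<open>G = {1..n}\<close> when \<open>n\<close> is odd and \<open>q\<close> is even).  Hence
\<open>V\<^sub>n + V\<^sub>nT\<close> and \<open>V\<^sub>n + V\<^sub>nT\<^sup>-\<^sup>1 = (V\<^sub>n + V\<^sub>nT)T\<^sup>-\<^sup>1\<close> both lie in \<open>V\<^sub>n + W\<close>, whose dimension
is at most \<open>min(2n - 1, d)\<close>, the common dimension of the two spaces by (C1).  So both equal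
\<open>V\<^sub>n + W\<close>.\<close>

definition displacements :: "'a::field ^ 'n ^ 'n \<Rightarrow> ('a ^ 'n) set" where
  "displacements M = range (\<lambda>x. x v* M - x)"

lemma linear_vector_matrix_mult: "Vector_Spaces.linear (*s) (*s) (\<lambda>x::'a::field^'n. x v* M)"
proof -
  have "(\<lambda>x::'a::field^'n. x v* M) = (*v) (transpose M)" by (auto simp: fun_eq_iff)
  then show ?thesis by simp
qed

lemma
  fixes T :: "'a::field^'n^'n"
  assumes "invertible T"
  shows matrix_mul_matrix_inv: "T ** matrix_inv T = mat 1"
    and matrix_inv_matrix_mul: "matrix_inv T ** T = mat 1"
  using someI_ex[OF assms[unfolded invertible_def]] unfolding matrix_inv_def by auto

lemma invertible_matrix_inv:
  fixes T :: "'a::field^'n^'n"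
  assumes "invertible T"
  shows "invertible (matrix_inv T)"
  using matrix_mul_matrix_inv[OF assms] matrix_inv_matrix_mul[OF assms]
  unfolding invertible_def by blast

lemma
  fixes T :: "'a::field^'n^'n"
  assumes "invertible T"
  shows vector_matrix_mul_inv_cancel: "(x v* T) v* matrix_inv T = x"
    and vector_matrix_inv_mul_cancel: "(x v* matrix_inv T) v* T = x"
  using matrix_mul_matrix_inv[OF assms] matrix_inv_matrix_mul[OF assms]
  by (simp_all add: vector_matrix_mul_assoc)

lemma subspace_img:
  fixes V :: "('a::field^'n) set"
  assumes "vec.subspace V"
  shows "vec.subspace (img V M)"
  unfolding img_def by (rule vec.linear_subspace_image[OF linear_vector_matrix_mult assms])

lemma subspace_ssum:
  assumes "vec.subspace A" "vec.subspace B"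
  shows "vec.subspace (ssum A B)"
  unfolding ssum_def by (rule vec.subspace_sums[OF assms])

lemma dim_ssum_le:
  assumes "vec.subspace A" "vec.subspace B"
  shows "vec.dim (ssum A B) \<le> vec.dim A + vec.dim B"
  using vec.dim_sums_Int[OF assms] unfolding ssum_def by linarith

lemma dim_img_invertible:
  fixes A :: "('a::field^'n) set"
  assumes "invertible T"
  shows "vec.dim (img A T) = vec.dim A"
proof -
  have "inj (\<lambda>x. x v* T)"
    by (rule inj_on_inverseI[where g = "\<lambda>x. x v* matrix_inv T"])
      (rule vector_matrix_mul_inv_cancel[OF assms])
  then show ?thesis
    unfolding img_def by (intro vec.dim_image_eq[OF linear_vector_matrix_mult]) (auto intro: inj_on_subset)
qed

lemma img_ssum_img_matrix_inv:
  fixes V :: "('a::field^'n) set"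
  assumes "invertible T"
  shows "img (ssum V (img V T)) (matrix_inv T) = ssum V (img V (matrix_inv T))"
proof -
  have eq: "(a + b v* T) v* matrix_inv T = b + a v* matrix_inv T" for a b
    by (simp add: vector_matrix_left_distrib vector_matrix_mul_inv_cancel[OF assms] add.commute)
  show ?thesis
  proof
    show "img (ssum V (img V T)) (matrix_inv T) \<subseteq> ssum V (img V (matrix_inv T))"
      unfolding img_def ssum_def by (auto simp: eq) blast
    show "ssum V (img V (matrix_inv T)) \<subseteq> img (ssum V (img V T)) (matrix_inv T)"
    proof
      fix z assume "z \<in> ssum V (img V (matrix_inv T))"
      then obtain a b where "a \<in> V" "b \<in> V" "z = b + a v* matrix_inv T"
        unfolding ssum_def img_def by auto
      then show "z \<in> img (ssum V (img V T)) (matrix_inv T)"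
        unfolding img_def ssum_def by (auto simp: eq[symmetric])
    qed
  qed
qed

lemma subspace_displacements: "vec.subspace (displacements (M :: 'a::field^'n^'n))"
proof -
  have "displacements M = (\<lambda>x. x v* (M - mat 1)) ` UNIV"
    by (simp add: displacements_def vector_matrix_mult_diff_rdistrib)
  then show ?thesis
    using vec.linear_subspace_image[OF linear_vector_matrix_mult vec.subspace_UNIV] by simp
qed

lemma displacements_matrix_inv_subset:
  fixes T :: "'a::field^'n^'n"
  assumes "invertible T"
  shows "displacements (matrix_inv T) \<subseteq> displacements T"
proof
  fix z assume "z \<in> displacements (matrix_inv T)"
  then obtain x where x: "z = x v* matrix_inv T - x" by (auto simp: displacements_def)
  define w where "w = x v* matrix_inv T"
  have "w v* T - w \<in> displacements T" by (auto simp: displacements_def)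
  then have "- (w v* T - w) \<in> displacements T" by (rule vec.subspace_neg[OF subspace_displacements])
  moreover have "z = - (w v* T - w)"
    by (simp add: x w_def vector_matrix_inv_mul_cancel[OF assms])
  ultimately show "z \<in> displacements T" by simp
qed

lemma displacements_conjugate:
  fixes E M :: "'a::field^'n^'n"
  assumes "invertible E"
  shows "displacements (matrix_inv E ** M ** E) \<subseteq> img (displacements M) E"
proof
  fix z assume "z \<in> displacements (matrix_inv E ** M ** E)"
  then obtain y where y: "z = y v* (matrix_inv E ** M ** E) - y" by (auto simp: displacements_def)
  define x where "x = y v* matrix_inv E"
  have "z = (x v* M - x) v* E"
    unfolding y x_def
    by (simp add: vector_matrix_mul_assoc vector_matrix_mult_diff_distrib
        matrix_inv_matrix_mul[OF assms])
  then show "z \<in> img (displacements M) E" by (auto simp: img_def displacements_def)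
qed

lemma ssum_img_subset_ssum:
  assumes "vec.subspace V" "displacements T \<subseteq> W"
  shows "ssum V (img V T) \<subseteq> ssum V W"
proof
  fix z assume "z \<in> ssum V (img V T)"
  then obtain a b where ab: "a \<in> V" "b \<in> V" "z = (a + b) + (b v* T - b)"
    unfolding ssum_def img_def by auto
  have "b v* T - b \<in> W" using assms(2) by (auto simp: displacements_def)
  then show "z \<in> ssum V W"
    using ab vec.subspace_add[OF assms(1)] unfolding ssum_def by blast
qed

lemma ssum_img_eq_ssum_img_matrix_inv:
  fixes V W :: "('a::field^'n) set" and T :: "'a^'n^'n"
  assumes V: "vec.subspace V" and W: "vec.subspace W" and T: "invertible T"
    and displ: "displacements T \<subseteq> W"
    and dim: "vec.dim (ssum V W) \<le> vec.dim (ssum V (img V T))"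
  shows "ssum V (img V T) = ssum V (img V (matrix_inv T))"
proof -
  have fwd: "ssum V (img V T) = ssum V W"
    using V W T dim
    by (intro vec.subspace_dim_equal subspace_ssum subspace_img ssum_img_subset_ssum displ)
  have "vec.dim (ssum V (img V (matrix_inv T))) = vec.dim (ssum V (img V T))"
    using img_ssum_img_matrix_inv[OF T, of V] dim_img_invertible[OF invertible_matrix_inv[OF T]]
    by metis
  then have "ssum V (img V (matrix_inv T)) = ssum V W"
    using V W dim displacements_matrix_inv_subset[OF T] displ
    by (intro vec.subspace_dim_equal subspace_ssum subspace_img ssum_img_subset_ssum) auto
  with fwd show ?thesis by simp
qed

lemma vector_matrix_mult_mat_of_nth:
  fixes \<iota> :: "nat \<Rightarrow> 'd::finite" and x :: "'a::field^'d"
  assumes bij: "bij_betw \<iota> {1..CARD('d)} UNIV" and j: "j \<in> {1..CARD('d)}"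
  shows "(x v* mat_of \<iota> M) $ \<iota> j = (\<Sum>k=1..CARD('d). x $ \<iota> k * M k j)"
proof -
  have inj: "inj_on \<iota> {1..CARD('d)}" using bij by (rule bij_betw_imp_inj_on)
  have "(x v* mat_of \<iota> M) $ \<iota> j = (\<Sum>i\<in>UNIV. x $ i * mat_of \<iota> M $ i $ \<iota> j)"
    by (simp add: vector_matrix_mult_def)
  also have "\<dots> = (\<Sum>k=1..CARD('d). x $ \<iota> k * mat_of \<iota> M $ \<iota> k $ \<iota> j)"
    by (rule sum.reindex_bij_betw[OF bij, symmetric])
  also have "\<dots> = (\<Sum>k=1..CARD('d). x $ \<iota> k * M k j)"
    using inj j by (intro sum.cong refl) (simp add: mat_of_def inv_into_f_f)
  finally show ?thesis .
qed

lemma std_basis_nth: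
  fixes \<iota> :: "nat \<Rightarrow> 'd::finite"
  assumes "inj_on \<iota> {1..CARD('d)}" "i \<in> {1..CARD('d)}" "j \<in> {1..CARD('d)}"
  shows "(std_basis \<iota> i :: 'a::field^'d) $ \<iota> j = (if j = i then 1 else 0)"
  using assms by (simp add: std_basis_def axis_def inj_on_eq_iff)

lemma dim_Vsub_le: "vec.dim (Vsub \<iota> n :: ('a::field^'d::finite) set) \<le> n"
proof -
  have "vec.dim (Vsub \<iota> n :: ('a^'d) set) \<le> card (std_basis \<iota> ` {1..n} :: ('a^'d) set)"
    unfolding Vsub_def vec.dim_span by (rule vec.dim_le_card[OF vec.span_superset]) auto
  also have "\<dots> \<le> n" using card_image_le[of "{1..n}" "std_basis \<iota>"] by simp
  finally show ?thesis .
qed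

lemma mem_Vsub_if_high_coordinates_zero:
  fixes \<iota> :: "nat \<Rightarrow> 'd::finite" and y :: "'a::field^'d"
  assumes bij: "bij_betw \<iota> {1..CARD('d)} UNIV"
    and zero: "\<And>j. j \<in> {n+1..CARD('d)} \<Longrightarrow> y $ \<iota> j = 0"
  shows "y \<in> Vsub \<iota> n"
proof -
  let ?J = "{1..min n CARD('d)}"
  let ?s = "\<Sum>j\<in>?J. (y $ \<iota> j) *s std_basis \<iota> j"
  have inj: "inj_on \<iota> {1..CARD('d)}" using bij by (rule bij_betw_imp_inj_on)
  have coord: "?s $ \<iota> k = y $ \<iota> k" if k: "k \<in> {1..CARD('d)}" for k
  proof -
    have "?s $ \<iota> k = (\<Sum>j\<in>?J. if j = k then y $ \<iota> j else 0)"
      unfolding sum_component using inj k by (intro sum.cong refl) (simp add: std_basis_nth)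
    also have "\<dots> = y $ \<iota> k" using k zero[of k] by auto
    finally show ?thesis .
  qed
  have "?s $ i = y $ i" for i
  proof -
    obtain k where k: "k \<in> {1..CARD('d)}" "i = \<iota> k"
      using bij by (metis bij_betw_iff_bijections UNIV_I)
    show ?thesis unfolding k(2) by (rule coord[OF k(1)])
  qed
  then have "?s = y" by (simp add: vec_eq_iff)
  moreover have "?s \<in> Vsub \<iota> n"
    unfolding Vsub_def by (intro vec.span_sum vec.span_scale vec.span_base) auto
  ultimately show ?thesis by simp
qed

lemma t_elem_high_coordinate:
  fixes \<iota> :: "nat \<Rightarrow> 'd::finite" and x :: "'a::field^'d"
  assumes bij: "bij_betw \<iota> {1..CARD('d)} UNIV" and "2 \<le> n" and j: "j \<in> {n+1..CARD('d)}"
  shows "(x v* t_elem \<iota> n) $ \<iota> j = x $ \<iota> j"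
proof -
  have "(x v* t_elem \<iota> n) $ \<iota> j = (\<Sum>k=1..CARD('d). x $ \<iota> k * t_nat n k j)"
    unfolding t_elem_def using j by (intro vector_matrix_mult_mat_of_nth[OF bij]) auto
  also have "\<dots> = (\<Sum>k=1..CARD('d). if k = j then x $ \<iota> k else 0)"
  proof (intro sum.cong refl)
    fix k
    have "t_nat n k j = (if k = j then 1 else 0 :: 'a)" using assms by (simp add: t_nat_def)
    then show "x $ \<iota> k * t_nat n k j = (if k = j then x $ \<iota> k else 0)" by simp
  qed
  also have "\<dots> = x $ \<iota> j" using j by simp
  finally show ?thesis .
qed

lemma displacements_t_elem_subset_Vsub:
  fixes \<iota> :: "nat \<Rightarrow> 'd::finite"
  assumes "bij_betw \<iota> {1..CARD('d)} UNIV" and "2 \<le> n"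
  shows "displacements (t_elem \<iota> n) \<subseteq> (Vsub \<iota> n :: ('a::field^'d) set)"
proof
  fix y :: "'a^'d" assume "y \<in> displacements (t_elem \<iota> n)"
  then obtain x where x: "y = x v* t_elem \<iota> n - x" by (auto simp: displacements_def)
  show "y \<in> Vsub \<iota> n"
    using assms by (intro mem_Vsub_if_high_coordinates_zero) (simp_all add: x t_elem_high_coordinate)
qed

lemma t_nat_invariant_columns:
  assumes "2 \<le> n" "n = 2 \<or> odd n"
  obtains G where "1 \<in> G" "G \<subseteq> {1..n}"
    "\<And>k. 1 \<le> k \<Longrightarrow> (\<Sum>j\<in>G. t_nat n k j :: 'a::field) = (if k \<in> G then 1 else 0)"
proof (cases "n = 2 \<or> CHAR('a) \<noteq> 2")
  case first_column: True
  have "t_nat n k 1 = (if k = 1 then 1 else 0 :: 'a)" if k: "1 \<le> k" for k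
  proof (cases "n = 2")
    case True
    then show ?thesis by (simp add: t_nat_def)
  next
    case False
    then have "CHAR('a) \<noteq> 2" "3 \<le> n" using first_column assms by auto
    then show ?thesis
      using k by (cases "k \<le> n") (auto simp: t_nat_def z2_def perm_mat_nat_def cyc2_def)
  qed
  then show ?thesis using assms by (intro that[of "{1}"]) auto
next
  case False
  then have n: "odd n" "3 \<le> n" "CHAR('a) = 2" using assms by auto
  have "(\<Sum>j=1..n. t_nat n k j :: 'a) = (if k \<in> {1..n} then 1 else 0)" if k: "1 \<le> k" for k
  proof (cases "k \<le> n")
    case True
    have "(\<Sum>j=1..n. t_nat n k j :: 'a) = (\<Sum>j=1..n. if j = cyc1 n k then 1 else 0)"
      using n True by (intro sum.cong refl) (auto simp: t_nat_def z1_def perm_mat_nat_def)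
    also have "\<dots> = 1" using n True k by (auto simp: cyc1_def)
    finally show ?thesis using True k by simp
  next
    case False
    then show ?thesis using n by (simp add: t_nat_def)
  qed
  then show ?thesis using assms by (intro that[of "{1..n}"]) auto
qed

lemma t_elem_invariant_coordinate_sum:
  fixes \<iota> :: "nat \<Rightarrow> 'd::finite"
  assumes bij: "bij_betw \<iota> {1..CARD('d)} UNIV"
    and n: "2 \<le> n" "n < CARD('d)" "n = 2 \<or> odd n"
  obtains G where "1 \<in> G" "G \<subseteq> {1..n}"
    "\<And>x :: 'a::field^'d. (\<Sum>j\<in>G. (x v* t_elem \<iota> n) $ \<iota> j) = (\<Sum>j\<in>G. x $ \<iota> j)"
proof -
  obtain G where G: "1 \<in> G" "G \<subseteq> {1..n}"
    and cols: "\<And>k. 1 \<le> k \<Longrightarrow> (\<Sum>j\<in>G. t_nat n k j :: 'a) = (if k \<in> G then 1 else 0)"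
    using t_nat_invariant_columns[OF n(1,3)] by blast
  have GD: "G \<subseteq> {1..CARD('d)}" using G(2) n(2) by auto
  have "(\<Sum>j\<in>G. (x v* t_elem \<iota> n) $ \<iota> j) = (\<Sum>j\<in>G. x $ \<iota> j)" for x :: "'a^'d"
  proof -
    have "(\<Sum>j\<in>G. (x v* t_elem \<iota> n) $ \<iota> j) = (\<Sum>j\<in>G. \<Sum>k=1..CARD('d). x $ \<iota> k * t_nat n k j)"
      unfolding t_elem_def using GD by (intro sum.cong refl vector_matrix_mult_mat_of_nth[OF bij]) auto
    also have "\<dots> = (\<Sum>k=1..CARD('d). x $ \<iota> k * (\<Sum>j\<in>G. t_nat n k j))"
      unfolding sum_distrib_left by (rule sum.swap)
    also have "\<dots> = (\<Sum>k=1..CARD('d). if k \<in> G then x $ \<iota> k else 0)"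
      using cols by (intro sum.cong refl) auto
    also have "\<dots> = (\<Sum>j\<in>G. x $ \<iota> j)"
      using GD by (simp add: sum.inter_restrict[symmetric] Int_absorb1)
    finally show ?thesis .
  qed
  with G show ?thesis by (rule that)
qed

lemma dim_displacements_t_elem_less:
  fixes \<iota> :: "nat \<Rightarrow> 'd::finite"
  assumes bij: "bij_betw \<iota> {1..CARD('d)} UNIV"
    and n: "2 \<le> n" "n < CARD('d)" "n = 2 \<or> odd n"
  shows "vec.dim (displacements (t_elem \<iota> n) :: ('a::field^'d) set) < n"
proof -
  let ?U = "displacements (t_elem \<iota> n) :: ('a^'d) set"
  let ?e = "std_basis \<iota> 1 :: 'a^'d"
  obtain G where G: "1 \<in> G" "G \<subseteq> {1..n}"
    and inv: "\<And>x :: 'a^'d. (\<Sum>j\<in>G. (x v* t_elem \<iota> n) $ \<iota> j) = (\<Sum>j\<in>G. x $ \<iota> j)"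
    using t_elem_invariant_coordinate_sum[OF assms] by blast
  have "?e \<notin> ?U"
  proof
    assume "?e \<in> ?U"
    then obtain x where "?e = x v* t_elem \<iota> n - x" by (auto simp: displacements_def)
    then have "(\<Sum>j\<in>G. ?e $ \<iota> j) = 0" by (simp add: sum_subtractf inv)
    moreover have "(\<Sum>j\<in>G. ?e $ \<iota> j) = (\<Sum>j\<in>G. if j = 1 then 1 else 0)"
      using G n(2) bij_betw_imp_inj_on[OF bij]
      by (intro sum.cong refl) (auto simp: std_basis_nth subset_iff)
    ultimately show False using G finite_subset[OF G(2)] by simp
  qed
  moreover have "?e \<in> Vsub \<iota> n" unfolding Vsub_def using n(1) by (intro vec.span_base) auto
  moreover have "?U \<subseteq> Vsub \<iota> n" by (rule displacements_t_elem_subset_Vsub[OF bij n(1)])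
  ultimately have "?U \<subset> Vsub \<iota> n" by blast
  moreover have "vec.span ?U = ?U" by (simp add: vec.span_eq_iff subspace_displacements)
  moreover have "vec.span (Vsub \<iota> n) = (Vsub \<iota> n :: ('a^'d) set)" by (simp add: Vsub_def)
  ultimately have "vec.span ?U \<subset> vec.span (Vsub \<iota> n)" by (simp only:)
  then have "vec.dim ?U < vec.dim (Vsub \<iota> n :: ('a^'d) set)" by (rule vec.dim_psubset)
  then show ?thesis using dim_Vsub_le by (rule less_le_trans)
qed

theorem mainTheorem5:
  fixes \<iota> :: "nat \<Rightarrow> 'd::finite" and n :: nat and E :: "'a::{field,finite} ^ 'd ^ 'd"
  assumes "bij_betw \<iota> {1..CARD('d)} (UNIV :: 'd set)"
    and "2 \<le> n" and "n < CARD('d)" and "n = 2 \<or> odd n"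
    and "det E = 1"
    and "weak_doubling \<iota> n (matrix_inv E ** t_elem \<iota> n ** E)"
  shows "ssum (Vsub \<iota> n) (img (Vsub \<iota> n) (matrix_inv E ** t_elem \<iota> n ** E))
       = ssum (Vsub \<iota> n) (img (Vsub \<iota> n) (matrix_inv (matrix_inv E ** t_elem \<iota> n ** E)))"
proof -
  let ?T = "matrix_inv E ** t_elem \<iota> n ** E"
  let ?V = "Vsub \<iota> n :: ('a^'d) set"
  let ?W = "img (displacements (t_elem \<iota> n)) E"
  have E: "invertible E" using assms(5) by (simp add: invertible_det_nz)
  have T: "invertible ?T" and C1: "vec.dim (ssum ?V (img ?V ?T)) = nprime n CARD('d)"
    using assms(6) by (auto simp: weak_doubling_def)
  have V: "vec.subspace ?V" and W: "vec.subspace ?W"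
    by (simp_all add: Vsub_def subspace_img subspace_displacements)
  have "vec.dim ?W < n"
    using dim_displacements_t_elem_less[OF assms(1-4)] dim_img_invertible[OF E] by simp
  moreover have "vec.dim ?V \<le> n" by (rule dim_Vsub_le)
  ultimately have "vec.dim (ssum ?V ?W) \<le> nprime n CARD('d)"
    using dim_ssum_le[OF V W] dim_subset_UNIV_cart_gen[of "ssum ?V ?W"]
    unfolding nprime_def by linarith
  then show ?thesis
    using ssum_img_eq_ssum_img_matrix_inv[OF V W T displacements_conjugate[OF E]] C1 by simp
qed

end
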